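(* Let $d \ge 2$, let $k \ge 0$, and let $A^{(1)},\dots,A^{(k)}$ be arbitrary parameter matrices of the appropriate sizes. Let $P \in \{0,1\}^{d\times d}$ be any permutation matrix other than the identity. Then there exists a matrix $Y \in \mathbb{R}^{d \times d}$ such that, when the $k$-layer decoder-only (causally masked), attention-only disentangled transformer with parameters $A^{(1)},\dots,A^{(k)}$ is run on the input $X = [P; Y_P]$ with $Y_P = PY$, the matrix $Y$ does not occur as a block of the final residual stream $h^{(k)}$, i.e. $Y$ is not equal to any submatrix of $h^{(k)}$ formed by $d$ consecutive rows and $d$ consecutive columns.
   Context: A permutation matrix $P \in \{0,1\}^{d\times d}$ has $i$-th row equal to the standard basis vector $e_{\pi(i)}$ for a permutation $\pi$ of $\{1,\dots,d\}$. For a matrix $Y \in \mathbb{R}^{d\times d}$ write $Y_P = PY$; the task of inverse permutation learning is to output $Y = P^{-1}Y_P = P^\top Y_P$. The input is $X = [P; Y_P] \in \mathbb{R}^{T \times d}$ (vertical stacking), $T = 2d$, and the initial residual stream is $h^{(0)} = [X, I_T] \in \mathbb{R}^{T \times (d+T)}$ (token embedding $X$ concatenated horizontally with one-hot position embeddings). Softmax $\mathcal{S}$ is applied row-wise, $\mathcal{S}(v)_i = \exp(v_i)/\sum_j\exp(v_j)$; $\mathrm{MASK}(V)_{ij} = V_{ij}$ if $i \ge j$ and $-\infty$ otherwise. The causally masked attention layer is $\mathrm{attn}(h;A) = \mathcal{S}(\mathrm{MASK}(hAh^\top))\,h$. The disentangled transformer computes $h^{(\ell+1)} = [\,h^{(\ell)},\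 \mathrm{attn}(h^{(\ell)};A^{(\ell+1)})\,]$ (horizontal concatenation) for $\ell = 0,\dots,k-1$, with $A^{(\ell+1)}$ square of size equal to the number of columns of $h^{(\ell)}$. The matrix $h^{(\ell)}$ is the residual stream at layer $\ell$; every $h^{(\ell)}$ is a submatrix of $h^{(k)}$. *)

theory Defs
  imports "HOL-Combinatorics.Permutations" Complex_Main
begin

(* Matrices are represented as functions nat => nat => real (row, column),
   indices starting at 0; dimensions are tracked explicitly. *)

definition perm_mat :: "(nat \<Rightarrow> nat) \<Rightarrow> nat \<Rightarrow> nat \<Rightarrow> real" where
  "perm_mat \<pi> i j = (if j = \<pi> i then 1 else 0)"

definition mat_mult :: "nat \<Rightarrow> (nat \<Rightarrow> nat \<Rightarrow> real) \<Rightarrow> (nat \<Rightarrow> nat \<Rightarrow> real) \<Rightarrow> nat \<Rightarrow> nat \<Rightarrow> real" where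
  "mat_mult d M N i j = (\<Sum>l<d. M i l * N l j)"

definition input_X :: "nat \<Rightarrow> (nat \<Rightarrow> nat \<Rightarrow> real) \<Rightarrow> (nat \<Rightarrow> nat \<Rightarrow> real) \<Rightarrow> nat \<Rightarrow> nat \<Rightarrow> real" where
  "input_X d P YP i j = (if i < d then P i j else YP (i - d) j)"

text \<open>Number of columns of the residual stream h^(l): (d + T) * 2^l with T = 2d.\<close>
definition width :: "nat \<Rightarrow> nat \<Rightarrow> nat" where
  "width d l = (d + 2 * d) * 2 ^ l"

text \<open>Initial residual stream h^(0) = [X, I_T], a T x (d+T) matrix.\<close>
definition h0 :: "nat \<Rightarrow> (nat \<Rightarrow> nat \<Rightarrow> real) \<Rightarrow> nat \<Rightarrow> nat \<Rightarrow> real" where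
  "h0 d X i j = (if j < d then X i j else (if j - d = i then 1 else 0))"

text \<open>Causally masked softmax attention S(MASK(h A h^T)) h, for a stream h with c columns.
  Row i of the softmax only gets weight on positions j \<le> i (masked entries are exp(-inf) = 0).\<close>
definition attn :: "nat \<Rightarrow> (nat \<Rightarrow> nat \<Rightarrow> real) \<Rightarrow> (nat \<Rightarrow> nat \<Rightarrow> real) \<Rightarrow> nat \<Rightarrow> nat \<Rightarrow> real" where
  "attn c h A i col =
     (let s = (\<lambda>j. \<Sum>a<c. \<Sum>b<c. h i a * A a b * h j b)
      in (\<Sum>j\<le>i. exp (s j) * h j col) / (\<Sum>j\<le>i. exp (s j)))"

text \<open>Residual stream of the disentangled transformer; A l is the parameter matrix A^(l+1)
  (of size width d l x width d l).
  h^(l+1) = [h^(l), attn(h^(l); A^(l+1))].\<close>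
fun stream :: "nat \<Rightarrow> (nat \<Rightarrow> nat \<Rightarrow> nat \<Rightarrow> real) \<Rightarrow> (nat \<Rightarrow> nat \<Rightarrow> real) \<Rightarrow> nat \<Rightarrow> nat \<Rightarrow> nat \<Rightarrow> real" where
  "stream d A X 0 = h0 d X"
| "stream d A X (Suc l) =
     (\<lambda>i j. if j < width d l then stream d A X l i j
            else attn (width d l) (stream d A X l) (A l) i (j - width d l))"

definition occurs_block :: "nat \<Rightarrow> nat \<Rightarrow> nat \<Rightarrow> (nat \<Rightarrow> nat \<Rightarrow> real) \<Rightarrow> (nat \<Rightarrow> nat \<Rightarrow> real) \<Rightarrow> bool" where
  "occurs_block d nrows ncols Y H =
     (\<exists>r c. r + d \<le> nrows \<and> c + d \<le> ncols \<and> (\<forall>i<d. \<forall>j<d. H (r + i) (c + j) = Y i j))"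

end

theory Submission
  imports Defs
begin

(* Causal masking makes row i of each attention output a convex combination of rows \<le> i of
   the stream it reads, so if rows < N of h^(0) have all entries in [0,1], so do rows < N of
   every h^(l).  Pick a descent m of \<pi>, i.e. \<pi> m < m, and let Y vanish except for row \<pi> m,
   whose entries are 2.  Then the only nonzero row of Y_P = PY is row m, hence rows < d + m of
   h^(0), and so of h^(k), lie in [0,1].  A block equal to Y starting at row r \<le> d would put
   the entry 2 into row r + \<pi> m < d + m. *)

lemma softmax_average_mem_interval:
  fixes w v :: "nat \<Rightarrow> real"
  assumes "\<And>j. j \<le> i \<Longrightarrow> v j \<in> {a..b}"
  shows "(\<Sum>j\<le>i. exp (w j) * v j) / (\<Sum>j\<le>i. exp (w j)) \<in> {a..b}"
proof -
  have pos: "(\<Sum>j\<le>i. exp (w j)) > 0"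
    by (rule sum_pos) auto
  have "a * (\<Sum>j\<le>i. exp (w j)) \<le> (\<Sum>j\<le>i. exp (w j) * v j)"
    unfolding sum_distrib_left using assms by (intro sum_mono) (simp add: mult.commute)
  moreover have "(\<Sum>j\<le>i. exp (w j) * v j) \<le> b * (\<Sum>j\<le>i. exp (w j))"
    unfolding sum_distrib_left using assms by (intro sum_mono) (simp add: mult.commute)
  ultimately show ?thesis
    using pos by (simp add: pos_le_divide_eq pos_divide_le_eq)
qed

lemma attn_mem_interval:
  assumes "\<And>j. j \<le> i \<Longrightarrow> h j col \<in> {a..b}"
  shows "attn c h A i col \<in> {a..b}"
  unfolding attn_def Let_def using assms by (rule softmax_average_mem_interval)

lemma stream_mem_interval:
  assumes "\<And>i' j. i' \<le> i \<Longrightarrow> h0 d X i' j \<in> {a..b}"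
  shows "stream d A X l i j \<in> {a..b}"
  using assms
proof (induction l arbitrary: i j)
  case 0
  then show ?case by simp
next
  case (Suc l)
  have "stream d A X l i' j' \<in> {a..b}" if "i' \<le> i" for i' j'
    using Suc that by force
  then have "attn (width d l) (stream d A X l) (A l) i (j - width d l) \<in> {a..b}"
    by (intro attn_mem_interval)
  with Suc show ?case
    by simp
qed

lemma h0_mem_unit_interval:
  assumes "\<And>j. j < d \<Longrightarrow> X i j \<in> {0..1}"
  shows "h0 d X i j \<in> {0..1}"
  using assms by (simp add: h0_def)

lemma mat_mult_perm_mat:
  assumes "\<pi> permutes {..<d}" and "a < d"
  shows "mat_mult d (perm_mat \<pi>) Y a b = Y (\<pi> a) b"
proof -
  have "\<pi> a < d"
    using assms permutes_in_image by fastforce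
  have "mat_mult d (perm_mat \<pi>) Y a b = (\<Sum>l<d. if l = \<pi> a then Y l b else 0)"
    unfolding mat_mult_def perm_mat_def by (intro sum.cong) auto
  also have "\<dots> = Y (\<pi> a) b"
    using \<open>\<pi> a < d\<close> by simp
  finally show ?thesis .
qed

lemma permutes_non_id_descent:
  fixes \<pi> :: "nat \<Rightarrow> nat"
  assumes "\<pi> permutes {..<d}" and "\<pi> \<noteq> id"
  obtains m where "m < d" and "\<pi> m < m"
proof (rule ccontr)
  assume "\<not> thesis"
  with that have ge: "m \<le> \<pi> m" if "m < d" for m
    using \<open>m < d\<close> not_le by blast
  obtain m0 where "\<pi> m0 \<noteq> m0"
    using assms(2) by (metis eq_id_iff)
  moreover from this have "m0 < d"
    using assms(1) by (meson lessThan_iff permutes_def)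
  ultimately have "m0 < \<pi> m0"
    using ge le_neq_implies_less by metis
  then have "(\<Sum>m<d. m) < (\<Sum>m<d. \<pi> m)"
    using ge \<open>m0 < d\<close> by (intro sum_strict_mono_ex1) auto
  moreover have "(\<Sum>m<d. \<pi> m) = (\<Sum>m<d. m)"
    using sum.permute[OF assms(1), of id] by (simp add: comp_def)
  ultimately show False
    by simp
qed

theorem theorem1:
  fixes d k :: nat and \<pi> :: "nat \<Rightarrow> nat" and A :: "nat \<Rightarrow> nat \<Rightarrow> nat \<Rightarrow> real"
  assumes "d \<ge> 2"
    and "\<pi> permutes {..<d}"
    and "\<pi> \<noteq> id"
  shows "\<exists>Y :: nat \<Rightarrow> nat \<Rightarrow> real.
           \<not> occurs_block d (2 * d) (width d k) Y
               (stream d A (input_X d (perm_mat \<pi>) (mat_mult d (perm_mat \<pi>) Y)) k)"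
proof -
  obtain m where m: "m < d" "\<pi> m < m"
    using permutes_non_id_descent[OF assms(2,3)] .
  define Y :: "nat \<Rightarrow> nat \<Rightarrow> real" where "Y = (\<lambda>a b. if a = \<pi> m then 2 else 0)"
  define X where "X = input_X d (perm_mat \<pi>) (mat_mult d (perm_mat \<pi>) Y)"
  have X_unit: "X i j \<in> {0..1}" if "i < d + m" for i j
  proof (cases "i < d")
    case False
    then have "i - d < m"
      using that by simp
    then have "\<pi> (i - d) \<noteq> \<pi> m"
      using permutes_inj[OF assms(2)] by (auto dest: injD)
    then show ?thesis
      using False that m by (simp add: X_def input_X_def mat_mult_perm_mat[OF assms(2)] Y_def)
  qed (simp add: X_def input_X_def perm_mat_def)
  have stream_unit: "stream d A X k i j \<in> {0..1}" if "i < d + m" for i j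
    using that X_unit by (intro stream_mem_interval h0_mem_unit_interval) auto
  have "\<not> occurs_block d (2 * d) (width d k) Y (stream d A X k)"
  proof
    assume "occurs_block d (2 * d) (width d k) Y (stream d A X k)"
    then obtain r c where "r + d \<le> 2 * d"
      and block: "\<forall>i<d. \<forall>j<d. stream d A X k (r + i) (c + j) = Y i j"
      unfolding occurs_block_def by blast
    then have "stream d A X k (r + \<pi> m) c = 2"
      using m block[rule_format, of "\<pi> m" 0] by (simp add: Y_def)
    moreover have "r + \<pi> m < d + m"
      using \<open>r + d \<le> 2 * d\<close> m by simp
    ultimately show False
      using stream_unit[of "r + \<pi> m" c] by simp
  qed
  then show ?thesis
    unfolding X_def by blast
qed

end
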